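(* Let $S$ be a condensed space. If $I\subseteq\mathscr{C}(S)[x_1,\dots,x_n]$ is a Groebner ideal with Groebner basis $G=\{f_1,\dots,f_k\}$, then for any set $A\subseteq S$ of measure zero, $G|_{S-A}=\{f_1|_{S-A},\dots,f_k|_{S-A}\}$ is a Groebner basis of the ideal $I(S-A)\subseteq\mathscr{C}(S-A)[x_1,\dots,x_n]$.
   Context: $S\subseteq\mathbb{R}^m$ (Euclidean subspace topology). $\mathscr{P}(S)$ is the ring of restrictions to $S$ of complex polynomials in the $m$ real coordinates; a real algebraic subset of $S$ is the common zero set in $S$ of finitely many elements of $\mathscr{P}(S)$; $S$ is condensed if every real algebraic subset $V\ne S$ is nowhere dense in $S$. A set $A\subseteq S$ has measure zero if $A\neq S$ and $A=\bigcap_{i\ge1}\bigcup_{j\ge1}V_{ij}$ for some real algebraic subsets $V_{ij}$ of $S$. For $U\subseteq S$, $\mathscr{C}(U)$ denotes continuous complex-valued functions on $U$, and $I(U)$ is the ideal of $\mathscr{C}(U)[x_1,\dots,x_n]$ generated by restrictions to $U$ of elements of $I$. Fix a monomial ordering. For nonzero $h=\sum_\alpha a_\alpha x^\alpha\in\mathscr{C}(U)[x_1,\dots,x_n]$, let $\alpha_1$ be the largest multi-index with $a_{\alpha_1}$ not identically zero; $LT(h)=a_{\alpha_1}x^{\alpha_1}$, $LC(h)=a_{\alpha_1}$. A finite generating set $\{g_1,\dots,g_k\}$ of an ideal $J\subseteq\mathscr{C}(U)[x_1,\dots,x_n]$ is a Groebner basis if $\langle LT(g_1),\dots,LT(g_k)\rangle=\langle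 LT(J)\rangle$ (ideal generated by leading terms of all elements of $J$) and each $LC(g_i)$ is nowhere vanishing on $U$; $J$ is a Groebner ideal if it has a Groebner basis. *)

theory Defs
  imports "HOL-Analysis.Analysis" "HOL-Library.Poly_Mapping" "HOL-Library.Function_Algebras"
begin

text \<open>Elements of P(S): restrictions to S of complex polynomials in the m real
coordinates of real^'m.  Only the values on S matter for what follows.\<close>
type_synonym 'm cmpoly = "('m \<Rightarrow>\<^sub>0 nat) \<Rightarrow>\<^sub>0 complex"

definition is_cpoly_fun :: "(real^'m::finite \<Rightarrow> complex) \<Rightarrow> bool" where
  "is_cpoly_fun p \<longleftrightarrow> (\<exists>q :: 'm cmpoly.
     \<forall>x. p x = (\<Sum>a\<in>Poly_Mapping.keys q. Poly_Mapping.lookup q a * (\<Prod>i\<in>UNIV. complex_of_real (x$i) ^ Poly_Mapping.lookup a i)))"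

definition real_algebraic_subset :: "(real^'m::finite) set \<Rightarrow> (real^'m) set \<Rightarrow> bool" where
  "real_algebraic_subset S V \<longleftrightarrow> (\<exists>F. finite F \<and> (\<forall>p\<in>F. is_cpoly_fun p) \<and>
      V = {x\<in>S. \<forall>p\<in>F. p x = 0})"

definition condensed :: "(real^'m::finite) set \<Rightarrow> bool" where
  "condensed S \<longleftrightarrow> (\<forall>V. real_algebraic_subset S V \<and> V \<noteq> S \<longrightarrow>
      (top_of_set S) interior_of ((top_of_set S) closure_of V) = {})"

definition measure_zero_in :: "(real^'m::finite) set \<Rightarrow> (real^'m) set \<Rightarrow> bool" where
  "measure_zero_in S A \<longleftrightarrow> A \<subseteq> S \<and> A \<noteq> S \<and> (\<exists>V :: nat \<Rightarrow> nat \<Rightarrow> (real^'m) set.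
      (\<forall>i j. real_algebraic_subset S (V i j)) \<and> A = (\<Inter>i. \<Union>j. V i j))"

text \<open>A polynomial in x_1..x_n (variables indexed 0..n-1) with coefficients functions
on the ambient space.  An element of C(U)[x] is represented canonically: every
coefficient is continuous on U and vanishes outside U.\<close>
type_synonym ('a) cpoly = "(nat \<Rightarrow>\<^sub>0 nat) \<Rightarrow>\<^sub>0 ('a \<Rightarrow> complex)"

definition CP :: "'a::topological_space set \<Rightarrow> nat \<Rightarrow> 'a cpoly set" where
  "CP U n = {p. (\<forall>\<alpha>\<in>Poly_Mapping.keys p. Poly_Mapping.keys \<alpha> \<subseteq> {..<n}) \<and>
      (\<forall>\<alpha>. continuous_on U (Poly_Mapping.lookup p \<alpha>) \<and> (\<forall>x. x \<notin> U \<longrightarrow> Poly_Mapping.lookup p \<alpha> x = 0))}"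

definition restr :: "'a set \<Rightarrow> 'a cpoly \<Rightarrow> 'a cpoly" where
  "restr U p = Poly_Mapping.map (\<lambda>c x. if x \<in> U then c x else 0) p"

definition ideal_gen :: "'a::topological_space set \<Rightarrow> nat \<Rightarrow> 'a cpoly set \<Rightarrow> 'a cpoly set" where
  "ideal_gen U n F = {p. \<exists>G q. finite G \<and> G \<subseteq> F \<and> (\<forall>g\<in>G. q g \<in> CP U n) \<and>
      p = (\<Sum>g\<in>G. q g * g)}"

definition ideal_restr :: "'a::topological_space set \<Rightarrow> nat \<Rightarrow> 'a cpoly set \<Rightarrow> 'a cpoly set" where
  "ideal_restr U n I = ideal_gen U n (restr U ` I)"

definition monomials :: "nat \<Rightarrow> (nat \<Rightarrow>\<^sub>0 nat) set" where
  "monomials n = {\<alpha>. Poly_Mapping.keys \<alpha> \<subseteq> {..<n}}"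

definition monomial_order :: "nat \<Rightarrow> ((nat \<Rightarrow>\<^sub>0 nat) \<Rightarrow> (nat \<Rightarrow>\<^sub>0 nat) \<Rightarrow> bool) \<Rightarrow> bool" where
  "monomial_order n ord \<longleftrightarrow>
     (\<forall>a\<in>monomials n. ord a a) \<and>
     (\<forall>a\<in>monomials n. \<forall>b\<in>monomials n. ord a b \<and> ord b a \<longrightarrow> a = b) \<and>
     (\<forall>a\<in>monomials n. \<forall>b\<in>monomials n. \<forall>c\<in>monomials n. ord a b \<and> ord b c \<longrightarrow> ord a c) \<and>
     (\<forall>a\<in>monomials n. \<forall>b\<in>monomials n. ord a b \<or> ord b a) \<and>
     (\<forall>a\<in>monomials n. \<forall>b\<in>monomials n. \<forall>c\<in>monomials n. ord a b \<longrightarrow> ord (a + c) (b + c)) \<and>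
     (\<forall>M. M \<subseteq> monomials n \<and> M \<noteq> {} \<longrightarrow> (\<exists>a\<in>M. \<forall>b\<in>M. ord a b))"

text \<open>Largest multi-index whose coefficient is not identically zero (on U, by
canonicity of the representation).\<close>
definition lead_exp :: "((nat \<Rightarrow>\<^sub>0 nat) \<Rightarrow> (nat \<Rightarrow>\<^sub>0 nat) \<Rightarrow> bool) \<Rightarrow> 'a cpoly \<Rightarrow> nat \<Rightarrow>\<^sub>0 nat" where
  "lead_exp ord h = (THE \<alpha>. \<alpha> \<in> Poly_Mapping.keys h \<and> (\<forall>\<beta>\<in>Poly_Mapping.keys h. ord \<beta> \<alpha>))"

definition LC :: "((nat \<Rightarrow>\<^sub>0 nat) \<Rightarrow> (nat \<Rightarrow>\<^sub>0 nat) \<Rightarrow> bool) \<Rightarrow> 'a cpoly \<Rightarrow> 'a \<Rightarrow> complex" where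
  "LC ord h = Poly_Mapping.lookup h (lead_exp ord h)"

definition LT :: "((nat \<Rightarrow>\<^sub>0 nat) \<Rightarrow> (nat \<Rightarrow>\<^sub>0 nat) \<Rightarrow> bool) \<Rightarrow> 'a cpoly \<Rightarrow> 'a cpoly" where
  "LT ord h = Poly_Mapping.single (lead_exp ord h) (LC ord h)"

definition groebner_basis ::
  "'a::topological_space set \<Rightarrow> nat \<Rightarrow> ((nat \<Rightarrow>\<^sub>0 nat) \<Rightarrow> (nat \<Rightarrow>\<^sub>0 nat) \<Rightarrow> bool)
     \<Rightarrow> 'a cpoly list \<Rightarrow> 'a cpoly set \<Rightarrow> bool" where
  "groebner_basis U n ord G J \<longleftrightarrow>
     set G \<subseteq> CP U n \<and>
     ideal_gen U n (set G) = J \<and>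
     ideal_gen U n (LT ord ` set G) = ideal_gen U n {LT ord h | h. h \<in> J \<and> h \<noteq> 0} \<and>
     (\<forall>g\<in>set G. \<forall>x\<in>U. LC ord g x \<noteq> 0)"

end

theory Submission
  imports Defs
begin

text \<open>
  The leading coefficients of a Groebner basis \<open>G\<close> of \<open>I\<close> are units of \<open>C(S)\<close>, so division by
  \<open>G\<close> works as over a field. Call a monomial standard if it is not divisible by any leading
  monomial of \<open>G\<close>. Every monomial \<open>x\<^sup>\<beta>\<close> is congruent modulo \<open>I\<close> to a combination \<open>N \<beta>\<close> of
  standard monomials below \<open>\<beta>\<close>, and an element of \<open>I\<close> supported on standard monomials is zero.
  For \<open>U \<subseteq> S\<close> the \<open>C(U)\<close>-linear normal form \<open>p \<mapsto> \<Sum>\<^sub>\<beta> p\<^sub>\<beta> (N \<beta>)|\<^sub>U\<close> therefore annihilates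
  \<open>I(U)\<close>, while it keeps the leading coefficient of every \<open>h\<close> whose leading monomial is
  standard. Hence the leading monomial of each nonzero \<open>h \<in> I(U)\<close> is divisible by that of some
  \<open>g \<in> G\<close>, and dividing the leading coefficient of \<open>h\<close> by the unit \<open>LC(g)\<close> shows that \<open>LT(h)\<close> lies
  in the ideal generated by \<open>LT(G|\<^sub>U)\<close>.
\<close>

lemma lookup_single_zero_mult:
  "Poly_Mapping.lookup (Poly_Mapping.single 0 c * p) k = c * Poly_Mapping.lookup p k"
  by (simp add: mult_map_scale_conv_mult[symmetric] Poly_Mapping.map.rep_eq when_def)

lemma lookup_single_mult_add:
  fixes p :: "('k::cancel_comm_monoid_add) \<Rightarrow>\<^sub>0 ('b::comm_semiring_1)"
  shows "Poly_Mapping.lookup (Poly_Mapping.single g c * p) (g + b) = c * Poly_Mapping.lookup p b"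
  by (simp add: lookup_mult lookup_single when_mult)

lemma lookup_single_mult_eq_zero:
  fixes p :: "('k::cancel_comm_monoid_add) \<Rightarrow>\<^sub>0 ('b::comm_semiring_1)"
  assumes "\<nexists>b. k = g + b"
  shows "Poly_Mapping.lookup (Poly_Mapping.single g c * p) k = 0"
  using assms by (simp add: lookup_mult lookup_single when_mult del: Sum_any.delta)

lemma keys_single_zero_mult_subset:
  "Poly_Mapping.keys (Poly_Mapping.single 0 c * p) \<subseteq> Poly_Mapping.keys p"
  by (auto simp: in_keys_iff lookup_single_zero_mult)

lemma keys_diff_single_lookup:
  "Poly_Mapping.keys (p - Poly_Mapping.single k (Poly_Mapping.lookup p k)) = Poly_Mapping.keys p - {k}"
  by (auto simp: in_keys_iff lookup_minus lookup_single when_def split: if_splits)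

lemma sum_single_lookup:
  "(\<Sum>a\<in>Poly_Mapping.keys p. Poly_Mapping.single a (Poly_Mapping.lookup p a)) = p"
  by (rule poly_mapping_eqI) (simp add: lookup_sum lookup_single when_def in_keys_iff)

lemma monomials_add: "a \<in> monomials n \<Longrightarrow> b \<in> monomials n \<Longrightarrow> a + b \<in> monomials n"
  unfolding monomials_def using keys_add[of a b] by blast

lemma monomials_zero: "0 \<in> monomials n"
  unfolding monomials_def by simp

lemma monomials_addD:
  fixes a b :: "nat \<Rightarrow>\<^sub>0 nat"
  assumes "a + b \<in> monomials n"
  shows "a \<in> monomials n" "b \<in> monomials n"
proof -
  have "Poly_Mapping.keys a \<subseteq> Poly_Mapping.keys (a + b)" "Poly_Mapping.keys b \<subseteq> Poly_Mapping.keys (a + b)"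
    by (auto simp: in_keys_iff lookup_add)
  then show "a \<in> monomials n" "b \<in> monomials n"
    using assms unfolding monomials_def by blast+
qed

lemma indicator_mult_vanishing:
  "(\<And>x. x \<notin> U \<Longrightarrow> f x = 0) \<Longrightarrow> indicator U * f = (f :: 'a \<Rightarrow> complex)"
  by (auto simp: fun_eq_iff indicator_def)

lemma indicator_mult_indicator_subset:
  "U \<subseteq> V \<Longrightarrow> indicator U * indicator V = (indicator U :: 'a \<Rightarrow> complex)"
  by (auto simp: fun_eq_iff indicator_def)

lemma CP_iff: "p \<in> CP U n \<longleftrightarrow> Poly_Mapping.keys p \<subseteq> monomials n \<and>
   (\<forall>\<alpha>. continuous_on U (Poly_Mapping.lookup p \<alpha>) \<and> (\<forall>x. x \<notin> U \<longrightarrow> Poly_Mapping.lookup p \<alpha> x = 0))"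
  unfolding CP_def monomials_def by blast

lemma CP_keys: "p \<in> CP U n \<Longrightarrow> Poly_Mapping.keys p \<subseteq> monomials n"
  and CP_continuous: "p \<in> CP U n \<Longrightarrow> continuous_on U (Poly_Mapping.lookup p \<alpha>)"
  and CP_vanishes: "p \<in> CP U n \<Longrightarrow> x \<notin> U \<Longrightarrow> Poly_Mapping.lookup p \<alpha> x = 0"
  unfolding CP_iff by auto

lemma CP_zero: "0 \<in> CP U n"
  by (simp add: CP_iff zero_fun_def)

lemma CP_add: "p \<in> CP U n \<Longrightarrow> q \<in> CP U n \<Longrightarrow> p + q \<in> CP U n"
  unfolding CP_iff using keys_add[of p q]
  by (auto simp: lookup_add plus_fun_def intro!: continuous_on_add)

lemma CP_uminus: "p \<in> CP U n \<Longrightarrow> - p \<in> CP U n"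
  unfolding CP_iff by (auto simp: fun_Compl_def intro!: continuous_on_minus)

lemma CP_diff: "p \<in> CP U n \<Longrightarrow> q \<in> CP U n \<Longrightarrow> p - q \<in> CP U n"
  by (metis CP_add CP_uminus diff_conv_add_uminus)

lemma CP_sum: "(\<And>i. i \<in> K \<Longrightarrow> f i \<in> CP U n) \<Longrightarrow> sum f K \<in> CP U n"
  by (induction K rule: infinite_finite_induct) (auto simp: CP_zero CP_add)

lemma CP_single:
  "\<gamma> \<in> monomials n \<Longrightarrow> continuous_on U c \<Longrightarrow> (\<And>x. x \<notin> U \<Longrightarrow> c x = 0) \<Longrightarrow>
   Poly_Mapping.single \<gamma> c \<in> CP U n"
  unfolding CP_iff by (auto simp: lookup_single when_def zero_fun_def)

lemma CP_single_indicator: "\<gamma> \<in> monomials n \<Longrightarrow> Poly_Mapping.single \<gamma> (indicator U) \<in> CP U n"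
  by (rule CP_single) (auto intro: continuous_on_eq[OF continuous_on_const])

lemma CP_mult:
  assumes "p \<in> CP U n" "q \<in> CP U n"
  shows "p * q \<in> CP U n"
proof -
  have "p * q = (\<Sum>a\<in>Poly_Mapping.keys p. Poly_Mapping.single a (Poly_Mapping.lookup p a)) *
        (\<Sum>b\<in>Poly_Mapping.keys q. Poly_Mapping.single b (Poly_Mapping.lookup q b))"
    by (simp add: sum_single_lookup)
  also have "\<dots> = (\<Sum>a\<in>Poly_Mapping.keys p. \<Sum>b\<in>Poly_Mapping.keys q.
      Poly_Mapping.single (a + b) (Poly_Mapping.lookup p a * Poly_Mapping.lookup q b))"
    by (simp add: sum_distrib_left sum_distrib_right mult_single) (rule sum.swap)
  also have "\<dots> \<in> CP U n"
    using assms CP_keys[OF assms(1)] CP_keys[OF assms(2)]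
    by (intro CP_sum CP_single)
      (auto simp: times_fun_def CP_vanishes intro!: monomials_add continuous_on_mult CP_continuous)
  finally show ?thesis .
qed

lemma ideal_genI:
  "finite H \<Longrightarrow> H \<subseteq> F \<Longrightarrow> \<forall>h\<in>H. q h \<in> CP U n \<Longrightarrow> (\<Sum>h\<in>H. q h * h) \<in> ideal_gen U n F"
  unfolding ideal_gen_def by blast

lemma ideal_genE:
  assumes "p \<in> ideal_gen U n F"
  obtains H q where "finite H" "H \<subseteq> F" "\<forall>h\<in>H. q h \<in> CP U n" "p = (\<Sum>h\<in>H. q h * h)"
  using assms unfolding ideal_gen_def by blast

lemma ideal_gen_zero: "0 \<in> ideal_gen U n F"
  using ideal_genI[of "{}" F] by simp

lemma ideal_gen_add:
  assumes "p \<in> ideal_gen U n F" "p' \<in> ideal_gen U n F"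
  shows "p + p' \<in> ideal_gen U n F"
proof -
  obtain H q where H: "finite H" "H \<subseteq> F" "\<forall>h\<in>H. q h \<in> CP U n" "p = (\<Sum>h\<in>H. q h * h)"
    using assms(1) by (rule ideal_genE)
  obtain H' q' where H': "finite H'" "H' \<subseteq> F" "\<forall>h\<in>H'. q' h \<in> CP U n"
    "p' = (\<Sum>h\<in>H'. q' h * h)"
    using assms(2) by (rule ideal_genE)
  define r where "r h = (if h \<in> H then q h else 0) + (if h \<in> H' then q' h else 0)" for h
  have "p = (\<Sum>h\<in>H \<union> H'. (if h \<in> H then q h else 0) * h)"
    unfolding H(4) using H(1) H'(1) by (intro sum.mono_neutral_cong_left) simp_all
  moreover have "p' = (\<Sum>h\<in>H \<union> H'. (if h \<in> H' then q' h else 0) * h)"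
    unfolding H'(4) using H(1) H'(1) by (intro sum.mono_neutral_cong_left) simp_all
  ultimately have "p + p' = (\<Sum>h\<in>H \<union> H'. r h * h)"
    by (simp add: r_def distrib_right sum.distrib)
  moreover have "\<forall>h\<in>H \<union> H'. r h \<in> CP U n"
    using H(3) H'(3) by (auto simp: r_def intro!: CP_add CP_zero)
  ultimately show ?thesis
    using H(1,2) H'(1,2) ideal_genI[of "H \<union> H'" F r] by simp
qed

lemma ideal_gen_mult:
  assumes "p \<in> ideal_gen U n F" "c \<in> CP U n"
  shows "c * p \<in> ideal_gen U n F"
proof -
  obtain H q where H: "finite H" "H \<subseteq> F" "\<forall>h\<in>H. q h \<in> CP U n" "p = (\<Sum>h\<in>H. q h * h)"
    using assms(1) by (rule ideal_genE)
  have "c * p = (\<Sum>h\<in>H. (c * q h) * h)"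
    unfolding H(4) sum_distrib_left by (simp add: mult.assoc)
  moreover have "\<forall>h\<in>H. c * q h \<in> CP U n"
    using H(3) assms(2) by (simp add: CP_mult)
  ultimately show ?thesis
    using H(1,2) ideal_genI[of H F "\<lambda>h. c * q h"] by simp
qed

lemma ideal_gen_uminus:
  assumes "p \<in> ideal_gen U n F"
  shows "- p \<in> ideal_gen U n F"
proof -
  obtain H q where H: "finite H" "H \<subseteq> F" "\<forall>h\<in>H. q h \<in> CP U n" "p = (\<Sum>h\<in>H. q h * h)"
    using assms by (rule ideal_genE)
  have "- p = (\<Sum>h\<in>H. (- q h) * h)"
    unfolding H(4) by (simp add: sum_negf)
  moreover have "\<forall>h\<in>H. - q h \<in> CP U n"
    using H(3) by (simp add: CP_uminus)
  ultimately show ?thesis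
    using H(1,2) ideal_genI[of H F "\<lambda>h. - q h"] by simp
qed

lemma ideal_gen_diff: "p \<in> ideal_gen U n F \<Longrightarrow> p' \<in> ideal_gen U n F \<Longrightarrow> p - p' \<in> ideal_gen U n F"
  by (metis diff_conv_add_uminus ideal_gen_add ideal_gen_uminus)

lemma ideal_gen_sum: "(\<And>i. i \<in> K \<Longrightarrow> f i \<in> ideal_gen U n F) \<Longrightarrow> sum f K \<in> ideal_gen U n F"
  by (induction K rule: infinite_finite_induct) (auto simp: ideal_gen_zero ideal_gen_add)

lemma ideal_gen_generator:
  assumes "f \<in> F" "\<And>\<alpha> x. x \<notin> U \<Longrightarrow> Poly_Mapping.lookup f \<alpha> x = 0"
  shows "f \<in> ideal_gen U n F"
proof -
  have "f = Poly_Mapping.single 0 (indicator U) * f"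
    using assms(2) by (intro poly_mapping_eqI) (simp add: lookup_single_zero_mult indicator_mult_vanishing)
  then show ?thesis
    using assms(1) CP_single_indicator[OF monomials_zero] unfolding ideal_gen_def
    by (intro CollectI exI[of _ "{f}"] exI[of _ "\<lambda>_. Poly_Mapping.single 0 (indicator U)"]) simp
qed

lemma ideal_gen_mono: "F' \<subseteq> F \<Longrightarrow> ideal_gen U n F' \<subseteq> ideal_gen U n F"
  unfolding ideal_gen_def by blast

lemma ideal_gen_subset_ideal_gen:
  assumes "F' \<subseteq> ideal_gen U n F"
  shows "ideal_gen U n F' \<subseteq> ideal_gen U n F"
proof
  fix p assume "p \<in> ideal_gen U n F'"
  then obtain H q where H: "finite H" "H \<subseteq> F'" "\<forall>h\<in>H. q h \<in> CP U n" "p = (\<Sum>h\<in>H. q h * h)"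
    by (rule ideal_genE)
  have "q h * h \<in> ideal_gen U n F" if "h \<in> H" for h
    using that H(2,3) assms ideal_gen_mult by blast
  then show "p \<in> ideal_gen U n F"
    unfolding H(4) by (rule ideal_gen_sum)
qed

lemma ideal_gen_subset_CP:
  assumes "F \<subseteq> CP U n"
  shows "ideal_gen U n F \<subseteq> CP U n"
proof
  fix p assume "p \<in> ideal_gen U n F"
  then obtain H q where H: "finite H" "H \<subseteq> F" "\<forall>h\<in>H. q h \<in> CP U n" "p = (\<Sum>h\<in>H. q h * h)"
    by (rule ideal_genE)
  have "q h * h \<in> CP U n" if "h \<in> H" for h
    using that H(2,3) assms CP_mult by blast
  then show "p \<in> CP U n"
    unfolding H(4) by (rule CP_sum)
qed

lemma restr_eq_single_indicator_mult: "restr U p = Poly_Mapping.single 0 (indicator U) * p"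
  by (rule poly_mapping_eqI)
    (auto simp: restr_def Poly_Mapping.map.rep_eq lookup_single_zero_mult indicator_def when_def fun_eq_iff)

lemma lookup_restr: "Poly_Mapping.lookup (restr U p) k = indicator U * Poly_Mapping.lookup p k"
  by (simp add: restr_eq_single_indicator_mult lookup_single_zero_mult)

lemma restr_vanishes: "x \<notin> U \<Longrightarrow> Poly_Mapping.lookup (restr U p) \<alpha> x = 0"
  by (simp add: lookup_restr)

lemma keys_restr_subset: "Poly_Mapping.keys (restr U p) \<subseteq> Poly_Mapping.keys p"
  unfolding restr_eq_single_indicator_mult by (rule keys_single_zero_mult_subset)

lemma restr_CP_eq: "p \<in> CP U n \<Longrightarrow> restr U p = p"
  by (rule poly_mapping_eqI) (simp add: lookup_restr indicator_mult_vanishing CP_vanishes)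

lemma restr_CP:
  assumes "p \<in> CP S n" "U \<subseteq> S"
  shows "restr U p \<in> CP U n"
  unfolding CP_iff
proof (intro conjI allI impI)
  show "Poly_Mapping.keys (restr U p) \<subseteq> monomials n"
    using keys_restr_subset CP_keys[OF assms(1)] by blast
  fix \<alpha>
  show "continuous_on U (Poly_Mapping.lookup (restr U p) \<alpha>)"
    using continuous_on_subset[OF CP_continuous[OF assms(1)] assms(2)]
    by (rule continuous_on_eq) (simp add: lookup_restr)
  show "\<And>x. x \<notin> U \<Longrightarrow> Poly_Mapping.lookup (restr U p) \<alpha> x = 0"
    by (rule restr_vanishes)
qed

lemma restr_mult: "restr U (p * q) = restr U p * restr U q"
proof -
  let ?e = "Poly_Mapping.single 0 (indicator U) :: ('b::comm_monoid_add \<Rightarrow>\<^sub>0 'a \<Rightarrow> complex)"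
  have "restr U p * restr U q = (?e * ?e) * (p * q)"
    unfolding restr_eq_single_indicator_mult by (simp add: ac_simps)
  also have "?e * ?e = ?e"
    by (simp add: mult_single indicator_mult_indicator_subset)
  finally show ?thesis
    by (simp add: restr_eq_single_indicator_mult)
qed

lemma restr_sum: "restr U (sum f K) = (\<Sum>k\<in>K. restr U (f k))"
  unfolding restr_eq_single_indicator_mult by (simp add: sum_distrib_left)

locale monomial_ordering =
  fixes n :: nat and ord :: "(nat \<Rightarrow>\<^sub>0 nat) \<Rightarrow> (nat \<Rightarrow>\<^sub>0 nat) \<Rightarrow> bool"
  assumes monomial_order: "monomial_order n ord"
begin

lemma monomial_order_refl: "a \<in> monomials n \<Longrightarrow> ord a a"
  using monomial_order[unfolded monomial_order_def, THEN conjunct1] by blast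

lemma monomial_order_antisym:
  "a \<in> monomials n \<Longrightarrow> b \<in> monomials n \<Longrightarrow> ord a b \<Longrightarrow> ord b a \<Longrightarrow> a = b"
  using monomial_order[unfolded monomial_order_def, THEN conjunct2, THEN conjunct1] by blast

lemma monomial_order_trans:
  "a \<in> monomials n \<Longrightarrow> b \<in> monomials n \<Longrightarrow> c \<in> monomials n \<Longrightarrow> ord a b \<Longrightarrow> ord b c \<Longrightarrow> ord a c"
  using monomial_order[unfolded monomial_order_def, THEN conjunct2, THEN conjunct2, THEN conjunct1]
  by blast

lemma monomial_order_linear: "a \<in> monomials n \<Longrightarrow> b \<in> monomials n \<Longrightarrow> ord a b \<or> ord b a"
  using monomial_order[unfolded monomial_order_def, THEN conjunct2, THEN conjunct2, THEN conjunct2,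
      THEN conjunct1]
  by blast

lemma monomial_order_add_right:
  "a \<in> monomials n \<Longrightarrow> b \<in> monomials n \<Longrightarrow> c \<in> monomials n \<Longrightarrow> ord a b \<Longrightarrow> ord (a + c) (b + c)"
  using monomial_order[unfolded monomial_order_def, THEN conjunct2, THEN conjunct2, THEN conjunct2,
      THEN conjunct2, THEN conjunct1]
  by blast

lemma monomial_order_has_min: "M \<subseteq> monomials n \<Longrightarrow> M \<noteq> {} \<Longrightarrow> \<exists>a\<in>M. \<forall>b\<in>M. ord a b"
  using monomial_order[unfolded monomial_order_def, THEN conjunct2, THEN conjunct2, THEN conjunct2,
      THEN conjunct2, THEN conjunct2]
  by blast

lemma monomial_order_finite_has_max:
  assumes "finite K" "K \<noteq> {}" "K \<subseteq> monomials n"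
  shows "\<exists>m\<in>K. \<forall>b\<in>K. ord b m"
  using assms
proof (induction K rule: finite_ne_induct)
  case (singleton x)
  then show ?case using monomial_order_refl by auto
next
  case (insert x F)
  then obtain m where m: "m \<in> F" "\<forall>b\<in>F. ord b m" by auto
  have "x \<in> monomials n" "m \<in> monomials n" "F \<subseteq> monomials n"
    using insert m by auto
  then consider "ord x m" | "ord m x"
    using monomial_order_linear by blast
  then show ?case
  proof cases
    case 1
    then show ?thesis using m by auto
  next
    case 2
    then have "\<forall>b\<in>F. ord b x"
      using m \<open>x \<in> monomials n\<close> \<open>m \<in> monomials n\<close> \<open>F \<subseteq> monomials n\<close>
      by (meson monomial_order_trans subsetD)
    then show ?thesis
      using monomial_order_refl \<open>x \<in> monomials n\<close> by auto
  qed
qed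

lemma lead_exp_eqI:
  assumes "Poly_Mapping.keys p \<subseteq> monomials n" "a \<in> Poly_Mapping.keys p"
    "\<forall>b\<in>Poly_Mapping.keys p. ord b a"
  shows "lead_exp ord p = a"
  unfolding lead_exp_def
  using assms monomial_order_antisym by (intro the_equality) blast+

lemma lead_exp_in_keys_and_max:
  assumes "Poly_Mapping.keys p \<subseteq> monomials n" "p \<noteq> 0"
  shows "lead_exp ord p \<in> Poly_Mapping.keys p \<and> (\<forall>b\<in>Poly_Mapping.keys p. ord b (lead_exp ord p))"
proof -
  obtain m where "m \<in> Poly_Mapping.keys p" "\<forall>b\<in>Poly_Mapping.keys p. ord b m"
    using monomial_order_finite_has_max[OF finite_keys _ assms(1)] assms(2) by auto
  with lead_exp_eqI[OF assms(1) this] show ?thesis by simp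
qed

lemma lead_exp_in_keys: "Poly_Mapping.keys p \<subseteq> monomials n \<Longrightarrow> p \<noteq> 0 \<Longrightarrow> lead_exp ord p \<in> Poly_Mapping.keys p"
  using lead_exp_in_keys_and_max by blast

lemma le_lead_exp: "Poly_Mapping.keys p \<subseteq> monomials n \<Longrightarrow> b \<in> Poly_Mapping.keys p \<Longrightarrow> ord b (lead_exp ord p)"
  using lead_exp_in_keys_and_max by fastforce

end

section \<open>Division by a Groebner basis with unit leading coefficients\<close>

definition standard_monomials ::
  "nat \<Rightarrow> ((nat \<Rightarrow>\<^sub>0 nat) \<Rightarrow> (nat \<Rightarrow>\<^sub>0 nat) \<Rightarrow> bool) \<Rightarrow> 'a cpoly list \<Rightarrow> (nat \<Rightarrow>\<^sub>0 nat) set" where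
  "standard_monomials n ord G = {\<beta> \<in> monomials n. \<forall>g\<in>set G. \<forall>\<gamma>. \<beta> \<noteq> lead_exp ord g + \<gamma>}"

locale nonempty_groebner_basis = monomial_ordering n ord
  for S :: "'a::topological_space set" and n ord and G :: "'a cpoly list" and I :: "'a cpoly set" +
  assumes groebner_basis: "groebner_basis S n ord G I"
    and nonempty: "S \<noteq> {}"
begin

abbreviation std :: "(nat \<Rightarrow>\<^sub>0 nat) set" where
  "std \<equiv> standard_monomials n ord G"

lemma basis_subset_CP: "set G \<subseteq> CP S n"
  and ideal_gen_basis: "ideal_gen S n (set G) = I"
  and ideal_gen_LT_basis: "ideal_gen S n (LT ord ` set G) = ideal_gen S n {LT ord h | h. h \<in> I \<and> h \<noteq> 0}"
  and LC_basis_nonzero: "g \<in> set G \<Longrightarrow> x \<in> S \<Longrightarrow> LC ord g x \<noteq> 0"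
  using groebner_basis unfolding groebner_basis_def by blast+

lemma ideal_subset_CP: "I \<subseteq> CP S n"
  using ideal_gen_subset_CP[OF basis_subset_CP] by (simp add: ideal_gen_basis)

lemma basis_subset_ideal: "g \<in> set G \<Longrightarrow> g \<in> I"
  using ideal_gen_generator[of g "set G" S n] basis_subset_CP CP_vanishes ideal_gen_basis by blast

lemma basis_keys: "g \<in> set G \<Longrightarrow> Poly_Mapping.keys g \<subseteq> monomials n"
  using basis_subset_CP CP_keys by blast

lemma ideal_keys: "p \<in> I \<Longrightarrow> Poly_Mapping.keys p \<subseteq> monomials n"
  using ideal_subset_CP CP_keys by blast

lemma ideal_vanishes: "p \<in> I \<Longrightarrow> x \<notin> S \<Longrightarrow> Poly_Mapping.lookup p \<alpha> x = 0"
  using ideal_subset_CP CP_vanishes by blast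

lemma ideal_add: "p \<in> I \<Longrightarrow> q \<in> I \<Longrightarrow> p + q \<in> I"
  unfolding ideal_gen_basis[symmetric] by (rule ideal_gen_add)

lemma ideal_diff: "p \<in> I \<Longrightarrow> q \<in> I \<Longrightarrow> p - q \<in> I"
  unfolding ideal_gen_basis[symmetric] by (rule ideal_gen_diff)

lemma ideal_mult: "p \<in> I \<Longrightarrow> c \<in> CP S n \<Longrightarrow> c * p \<in> I"
  unfolding ideal_gen_basis[symmetric] by (rule ideal_gen_mult)

lemma ideal_sum: "(\<And>i. i \<in> K \<Longrightarrow> f i \<in> I) \<Longrightarrow> sum f K \<in> I"
  unfolding ideal_gen_basis[symmetric] by (rule ideal_gen_sum)

lemma ideal_zero: "0 \<in> I"
  unfolding ideal_gen_basis[symmetric] by (rule ideal_gen_zero)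

lemma basis_nonzero: "g \<in> set G \<Longrightarrow> g \<noteq> 0"
  using LC_basis_nonzero[of g] nonempty by (auto simp: LC_def)

lemma lead_exp_basis_monomial: "g \<in> set G \<Longrightarrow> lead_exp ord g \<in> monomials n"
  using lead_exp_in_keys[OF basis_keys basis_nonzero] basis_keys by blast

lemma standard_ideal_element_eq_zero:
  assumes "p \<in> I" "Poly_Mapping.keys p \<subseteq> std"
  shows "p = 0"
proof (rule ccontr)
  assume "p \<noteq> 0"
  define \<delta> where "\<delta> = lead_exp ord p"
  have "\<delta> \<in> Poly_Mapping.keys p"
    unfolding \<delta>_def using ideal_keys[OF assms(1)] \<open>p \<noteq> 0\<close> by (rule lead_exp_in_keys)
  then have "\<delta> \<in> std"
    using assms(2) by blast
  have "LT ord p \<in> ideal_gen S n {LT ord h | h. h \<in> I \<and> h \<noteq> 0}"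
    using assms(1) \<open>p \<noteq> 0\<close>
    by (intro ideal_gen_generator) (auto simp: LT_def LC_def lookup_single when_def ideal_vanishes)
  then have "LT ord p \<in> ideal_gen S n (LT ord ` set G)"
    by (simp add: ideal_gen_LT_basis)
  then obtain H q where H: "finite H" "H \<subseteq> LT ord ` set G" "\<forall>t\<in>H. q t \<in> CP S n"
    "LT ord p = (\<Sum>t\<in>H. q t * t)"
    by (rule ideal_genE)
  have "Poly_Mapping.lookup (q t * t) \<delta> = 0" if "t \<in> H" for t
  proof -
    obtain g where g: "g \<in> set G" "t = LT ord g"
      using H(2) \<open>t \<in> H\<close> by blast
    then have "\<nexists>\<gamma>. \<delta> = lead_exp ord g + \<gamma>"
      using \<open>\<delta> \<in> std\<close> unfolding standard_monomials_def by blast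
    then show ?thesis
      unfolding g(2) LT_def by (simp add: mult.commute[of "q _"] lookup_single_mult_eq_zero)
  qed
  then have "Poly_Mapping.lookup (LT ord p) \<delta> = 0"
    unfolding H(4) lookup_sum by simp
  then show False
    using \<open>\<delta> \<in> Poly_Mapping.keys p\<close> by (simp add: LT_def LC_def \<delta>_def in_keys_iff)
qed

lemma CP_single_div_LC:
  assumes "U \<subseteq> S" "g \<in> set G" "\<gamma> \<in> monomials n" "continuous_on U a" "\<And>x. x \<notin> U \<Longrightarrow> a x = 0"
  shows "Poly_Mapping.single \<gamma> (\<lambda>x. a x / LC ord g x) \<in> CP U n"
proof (rule CP_single[OF assms(3)])
  have "continuous_on U (LC ord g)"
    unfolding LC_def using assms(1,2) basis_subset_CP CP_continuous continuous_on_subset by blast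
  then show "continuous_on U (\<lambda>x. a x / LC ord g x)"
    using assms(1,2,4) LC_basis_nonzero by (intro continuous_on_divide) auto
qed (simp add: assms(5))

lemma ideal_element_with_lead_coeff:
  assumes "\<delta> \<in> monomials n" "\<delta> \<notin> std" "continuous_on S a" "\<And>x. x \<notin> S \<Longrightarrow> a x = 0"
  obtains m where "m \<in> I" "\<forall>k\<in>Poly_Mapping.keys m. ord k \<delta>" "Poly_Mapping.lookup m \<delta> = a"
proof -
  obtain g \<gamma> where g: "g \<in> set G" "\<delta> = lead_exp ord g + \<gamma>"
    using assms(1,2) unfolding standard_monomials_def by blast
  have "\<gamma> \<in> monomials n"
    using monomials_addD(2) assms(1) g(2) by metis
  define c where "c = (\<lambda>x. a x / LC ord g x)"
  define m where "m = Poly_Mapping.single \<gamma> c * g"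
  have "m \<in> I"
    unfolding m_def c_def using assms(3,4) g(1) \<open>\<gamma> \<in> monomials n\<close>
    by (intro ideal_mult basis_subset_ideal CP_single_div_LC) auto
  moreover have "\<forall>k\<in>Poly_Mapping.keys m. ord k \<delta>"
  proof
    fix k assume "k \<in> Poly_Mapping.keys m"
    then obtain b where b: "b \<in> Poly_Mapping.keys g" "k = \<gamma> + b"
      using keys_mult[of "Poly_Mapping.single \<gamma> c" g] unfolding m_def
      by (auto split: if_splits)
    have "ord (b + \<gamma>) (lead_exp ord g + \<gamma>)"
      using b(1) basis_keys[OF g(1)]
      by (intro monomial_order_add_right lead_exp_basis_monomial g(1) \<open>\<gamma> \<in> monomials n\<close>
          le_lead_exp) auto
    then show "ord k \<delta>"
      using b(2) g(2) by (simp add: add.commute)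
  qed
  moreover have "Poly_Mapping.lookup m \<delta> = a"
  proof -
    have "Poly_Mapping.lookup m \<delta> = c * LC ord g"
      unfolding m_def g(2) LC_def by (simp add: add.commute[of "lead_exp ord g"] lookup_single_mult_add)
    also have "\<dots> = a"
      using assms(4) LC_basis_nonzero[OF g(1)] by (auto simp: c_def fun_eq_iff)
    finally show ?thesis .
  qed
  ultimately show ?thesis
    by (rule that)
qed

section \<open>Normal forms\<close>

text \<open>The last condition keeps the remainder of \<open>x\<^sup>\<beta>\<close> below \<open>\<beta>\<close>; this is what lets the normal
  form see the leading coefficient of a polynomial with standard leading monomial.\<close>

definition standard_remainder :: "'a cpoly \<Rightarrow> 'a cpoly \<Rightarrow> bool" where
  "standard_remainder p r \<longleftrightarrow> r \<in> CP S n \<and> p - r \<in> I \<and> Poly_Mapping.keys r \<subseteq> std \<and>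
     (\<forall>k\<in>Poly_Mapping.keys r. \<exists>k'\<in>Poly_Mapping.keys p. ord k k')"

lemma standard_remainder_zero: "standard_remainder 0 0"
  unfolding standard_remainder_def using CP_zero ideal_zero by simp

lemma standard_remainder_add_standard_term:
  assumes "p \<in> CP S n" "\<delta> \<in> Poly_Mapping.keys p" "\<delta> \<in> std"
    and "standard_remainder (p - Poly_Mapping.single \<delta> (Poly_Mapping.lookup p \<delta>)) r"
  shows "standard_remainder p (r + Poly_Mapping.single \<delta> (Poly_Mapping.lookup p \<delta>))"
proof -
  let ?t = "Poly_Mapping.single \<delta> (Poly_Mapping.lookup p \<delta>)"
  have r: "r \<in> CP S n" "p - ?t - r \<in> I" "Poly_Mapping.keys r \<subseteq> std"
    "\<forall>k\<in>Poly_Mapping.keys r. \<exists>k'\<in>Poly_Mapping.keys p - {\<delta>}. ord k k'"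
    using assms(4) unfolding standard_remainder_def keys_diff_single_lookup by auto
  have "\<delta> \<in> monomials n"
    using assms(3) unfolding standard_monomials_def by blast
  then have "?t \<in> CP S n"
    using assms(1) by (intro CP_single CP_continuous CP_vanishes)
  have keys_sum: "Poly_Mapping.keys (r + ?t) \<subseteq> Poly_Mapping.keys r \<union> {\<delta>}"
    using keys_add[of r ?t] by (auto split: if_splits)
  have "r + ?t \<in> CP S n"
    using r(1) \<open>?t \<in> CP S n\<close> by (rule CP_add)
  moreover have "p - (r + ?t) \<in> I"
    using r(2) by (simp add: algebra_simps)
  moreover have "Poly_Mapping.keys (r + ?t) \<subseteq> std"
    using keys_sum r(3) assms(3) by blast
  moreover have "\<forall>k\<in>Poly_Mapping.keys (r + ?t). \<exists>k'\<in>Poly_Mapping.keys p. ord k k'"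
    using keys_sum r(4) assms(2) monomial_order_refl[OF \<open>\<delta> \<in> monomials n\<close>] by blast
  ultimately show ?thesis
    unfolding standard_remainder_def by blast
qed

lemma standard_remainder_diff_ideal:
  assumes "p \<in> CP S n" "m \<in> I" "\<delta> \<in> Poly_Mapping.keys p"
    and "\<forall>k\<in>Poly_Mapping.keys (p - m). ord k \<delta>"
    and "standard_remainder (p - m) r"
  shows "standard_remainder p r"
proof -
  have r: "r \<in> CP S n" "p - m - r \<in> I" "Poly_Mapping.keys r \<subseteq> std"
    "\<forall>k\<in>Poly_Mapping.keys r. \<exists>k'\<in>Poly_Mapping.keys (p - m). ord k k'"
    using assms(5) unfolding standard_remainder_def by auto
  have "p - r = (p - m - r) + m"
    by (simp add: algebra_simps)
  then have "p - r \<in> I"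
    using ideal_add[OF r(2) assms(2)] by simp
  have "p - m \<in> CP S n"
    using assms(1,2) ideal_subset_CP CP_diff by blast
  have "ord k \<delta>" if k: "k \<in> Poly_Mapping.keys r" for k
  proof -
    obtain k' where k': "k' \<in> Poly_Mapping.keys (p - m)" "ord k k'"
      using r(4) k by blast
    have "k \<in> monomials n" "k' \<in> monomials n" "\<delta> \<in> monomials n"
      using CP_keys[OF r(1)] CP_keys[OF \<open>p - m \<in> CP S n\<close>] CP_keys[OF assms(1)] k k'(1) assms(3)
      by auto
    then show ?thesis
      using k'(2) assms(4) k'(1) by (blast intro: monomial_order_trans)
  qed
  then show ?thesis
    unfolding standard_remainder_def using r(1,3) \<open>p - r \<in> I\<close> assms(3) by blast
qed

lemma standard_remainder_exists_step:
  assumes "p \<in> CP S n" "p \<noteq> 0"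
    and less: "\<And>p'. p' \<in> CP S n \<Longrightarrow> \<forall>k\<in>Poly_Mapping.keys p'. ord k (lead_exp ord p) \<Longrightarrow>
      lead_exp ord p \<notin> Poly_Mapping.keys p' \<Longrightarrow> \<exists>r. standard_remainder p' r"
  shows "\<exists>r. standard_remainder p r"
proof -
  define \<delta> where "\<delta> = lead_exp ord p"
  note less = less[folded \<delta>_def]
  have keys: "Poly_Mapping.keys p \<subseteq> monomials n"
    using assms(1) by (rule CP_keys)
  have \<delta>: "\<delta> \<in> Poly_Mapping.keys p" "\<delta> \<in> monomials n"
    using lead_exp_in_keys[OF keys assms(2)] keys by (auto simp: \<delta>_def)
  have max: "\<forall>k\<in>Poly_Mapping.keys p. ord k \<delta>"
    using le_lead_exp[OF keys] by (simp add: \<delta>_def)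
  show ?thesis
  proof (cases "\<delta> \<in> std")
    case True
    let ?t = "Poly_Mapping.single \<delta> (Poly_Mapping.lookup p \<delta>)"
    have "p - ?t \<in> CP S n"
      using assms(1) \<delta>(2) by (intro CP_diff CP_single CP_continuous CP_vanishes)
    moreover have "\<forall>k\<in>Poly_Mapping.keys (p - ?t). ord k \<delta>" "\<delta> \<notin> Poly_Mapping.keys (p - ?t)"
      using max unfolding keys_diff_single_lookup by auto
    ultimately obtain r where "standard_remainder (p - ?t) r"
      using less by blast
    then show ?thesis
      using standard_remainder_add_standard_term[OF assms(1) \<delta>(1) True] by blast
  next
    case False
    obtain m where m: "m \<in> I" "\<forall>k\<in>Poly_Mapping.keys m. ord k \<delta>"
      "Poly_Mapping.lookup m \<delta> = Poly_Mapping.lookup p \<delta>"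
      by (rule ideal_element_with_lead_coeff[OF \<delta>(2) False CP_continuous[OF assms(1)]
          CP_vanishes[OF assms(1)]])
    have "p - m \<in> CP S n"
      using assms(1) m(1) ideal_subset_CP CP_diff by blast
    moreover have "\<forall>k\<in>Poly_Mapping.keys (p - m). ord k \<delta>"
      using keys_diff[of p m] max m(2) by blast
    moreover have "\<delta> \<notin> Poly_Mapping.keys (p - m)"
      using m(3) by (simp add: in_keys_iff lookup_minus)
    ultimately obtain r where "standard_remainder (p - m) r"
      using less by blast
    then show ?thesis
      using standard_remainder_diff_ideal[OF assms(1) m(1) \<delta>(1)]
        \<open>\<forall>k\<in>Poly_Mapping.keys (p - m). ord k \<delta>\<close> by blast
  qed
qed

lemma standard_remainder_exists:
  assumes "p \<in> CP S n"
  shows "\<exists>r. standard_remainder p r"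
proof (rule ccontr)
  assume "\<nexists>r. standard_remainder p r"
  define M where "M = {lead_exp ord q | q. q \<in> CP S n \<and> (\<nexists>r. standard_remainder q r)}"
  have irreducible_lead: "q \<noteq> 0 \<and> lead_exp ord q \<in> Poly_Mapping.keys q"
    if "q \<in> CP S n" "\<nexists>r. standard_remainder q r" for q
    using that standard_remainder_zero lead_exp_in_keys[OF CP_keys] by blast
  have "M \<subseteq> monomials n"
    unfolding M_def using irreducible_lead CP_keys by blast
  moreover have "M \<noteq> {}"
    unfolding M_def using assms \<open>\<nexists>r. standard_remainder p r\<close> by blast
  ultimately obtain \<delta> where "\<delta> \<in> M" and \<delta>_min: "\<forall>d\<in>M. ord \<delta> d"
    using monomial_order_has_min by blast
  then obtain q where q: "\<delta> = lead_exp ord q" "q \<in> CP S n" "\<nexists>r. standard_remainder q r"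
    unfolding M_def by blast
  have "\<exists>r. standard_remainder q r"
  proof (rule standard_remainder_exists_step[OF q(2)])
    show "q \<noteq> 0"
      using irreducible_lead q(2,3) by blast
    fix p' assume p': "p' \<in> CP S n" "\<forall>k\<in>Poly_Mapping.keys p'. ord k (lead_exp ord q)"
      "lead_exp ord q \<notin> Poly_Mapping.keys p'"
    show "\<exists>r. standard_remainder p' r"
    proof (rule ccontr)
      assume irreducible: "\<nexists>r. standard_remainder p' r"
      then have "lead_exp ord p' \<in> M"
        unfolding M_def using p'(1) by blast
      moreover have lead: "lead_exp ord p' \<in> Poly_Mapping.keys p'"
        using irreducible_lead[OF p'(1) irreducible] by blast
      ultimately have "lead_exp ord p' = \<delta>"
        using \<delta>_min p'(2) q(1) \<open>\<delta> \<in> M\<close> \<open>M \<subseteq> monomials n\<close> monomial_order_antisym by blast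
      then show False
        using lead p'(3) q(1) by simp
    qed
  qed
  then show False
    using q(3) by blast
qed

definition nf_monomial :: "(nat \<Rightarrow>\<^sub>0 nat) \<Rightarrow> 'a cpoly" where
  "nf_monomial \<beta> = (SOME r. standard_remainder (Poly_Mapping.single \<beta> (indicator S)) r)"

lemma nf_monomial:
  assumes "\<beta> \<in> monomials n"
  shows "nf_monomial \<beta> \<in> CP S n"
    and "Poly_Mapping.single \<beta> (indicator S) - nf_monomial \<beta> \<in> I"
    and "Poly_Mapping.keys (nf_monomial \<beta>) \<subseteq> std"
    and "\<And>k. k \<in> Poly_Mapping.keys (nf_monomial \<beta>) \<Longrightarrow> ord k \<beta>"
proof -
  have "standard_remainder (Poly_Mapping.single \<beta> (indicator S)) (nf_monomial \<beta>)"
    unfolding nf_monomial_def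
    using standard_remainder_exists[OF CP_single_indicator[OF assms]] by (rule someI_ex)
  then show "nf_monomial \<beta> \<in> CP S n"
    and "Poly_Mapping.single \<beta> (indicator S) - nf_monomial \<beta> \<in> I"
    and "Poly_Mapping.keys (nf_monomial \<beta>) \<subseteq> std"
    and "\<And>k. k \<in> Poly_Mapping.keys (nf_monomial \<beta>) \<Longrightarrow> ord k \<beta>"
    unfolding standard_remainder_def by (auto split: if_splits)
qed

lemma nf_monomial_standard:
  assumes "\<beta> \<in> std"
  shows "nf_monomial \<beta> = Poly_Mapping.single \<beta> (indicator S)"
proof -
  have "\<beta> \<in> monomials n"
    using assms unfolding standard_monomials_def by blast
  then have "Poly_Mapping.keys (Poly_Mapping.single \<beta> (indicator S) - nf_monomial \<beta>) \<subseteq> std"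
    using keys_diff[of "Poly_Mapping.single \<beta> (indicator S)" "nf_monomial \<beta>"] nf_monomial(3) assms
    by (auto split: if_splits)
  then have "Poly_Mapping.single \<beta> (indicator S) - nf_monomial \<beta> = 0"
    using standard_ideal_element_eq_zero nf_monomial(2)[OF \<open>\<beta> \<in> monomials n\<close>] by blast
  then show ?thesis
    by simp
qed

definition normal_form :: "'a set \<Rightarrow> 'a cpoly \<Rightarrow> 'a cpoly" where
  "normal_form U p =
     (\<Sum>\<beta>\<in>Poly_Mapping.keys p. Poly_Mapping.single 0 (Poly_Mapping.lookup p \<beta>) * restr U (nf_monomial \<beta>))"

lemma normal_form_eq_sum_superset:
  assumes "finite K" "Poly_Mapping.keys p \<subseteq> K"
  shows "normal_form U p =
    (\<Sum>\<beta>\<in>K. Poly_Mapping.single 0 (Poly_Mapping.lookup p \<beta>) * restr U (nf_monomial \<beta>))"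
  unfolding normal_form_def by (rule sum.mono_neutral_left[OF assms]) (auto simp: in_keys_iff)

lemma normal_form_add: "normal_form U (p + q) = normal_form U p + normal_form U q"
proof -
  let ?K = "Poly_Mapping.keys p \<union> Poly_Mapping.keys q"
  let ?nf = "\<lambda>r. \<Sum>\<beta>\<in>?K. Poly_Mapping.single 0 (Poly_Mapping.lookup r \<beta>) * restr U (nf_monomial \<beta>)"
  have "normal_form U (p + q) = ?nf (p + q)"
    by (rule normal_form_eq_sum_superset) (simp_all add: keys_add)
  also have "\<dots> = ?nf p + ?nf q"
    by (simp add: lookup_add single_add distrib_right sum.distrib)
  also have "\<dots> = normal_form U p + normal_form U q"
    using normal_form_eq_sum_superset[of ?K p U] normal_form_eq_sum_superset[of ?K q U] by simp
  finally show ?thesis .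
qed

lemma normal_form_zero: "normal_form U 0 = 0"
  by (simp add: normal_form_def)

lemma normal_form_sum: "normal_form U (sum f K) = (\<Sum>k\<in>K. normal_form U (f k))"
  by (induction K rule: infinite_finite_induct) (simp_all add: normal_form_zero normal_form_add)

lemma normal_form_single_zero_mult:
  "normal_form U (Poly_Mapping.single 0 c * p) = Poly_Mapping.single 0 c * normal_form U p"
proof -
  have "normal_form U (Poly_Mapping.single 0 c * p) = (\<Sum>\<beta>\<in>Poly_Mapping.keys p.
      Poly_Mapping.single 0 (Poly_Mapping.lookup (Poly_Mapping.single 0 c * p) \<beta>) * restr U (nf_monomial \<beta>))"
    by (rule normal_form_eq_sum_superset) (simp_all add: keys_single_zero_mult_subset)
  also have "\<dots> = Poly_Mapping.single 0 c * normal_form U p"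
    unfolding normal_form_def sum_distrib_left lookup_single_zero_mult
    by (simp add: mult.assoc[symmetric] mult_single)
  finally show ?thesis .
qed

lemma normal_form_restr:
  assumes "U \<subseteq> S"
  shows "normal_form U (restr U f) = restr U (normal_form S f)"
proof -
  have "normal_form U (restr U f) = (\<Sum>\<beta>\<in>Poly_Mapping.keys f.
      Poly_Mapping.single 0 (Poly_Mapping.lookup (restr U f) \<beta>) * restr U (nf_monomial \<beta>))"
    by (rule normal_form_eq_sum_superset) (simp_all add: keys_restr_subset)
  also have "\<dots> = restr U (normal_form S f)"
    unfolding normal_form_def restr_sum
    using assms by (intro sum.cong refl poly_mapping_eqI)
      (auto simp: lookup_restr lookup_single_zero_mult times_fun_def indicator_def fun_eq_iff)
  finally show ?thesis .
qed

lemma keys_normal_form_standard: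
  assumes "Poly_Mapping.keys p \<subseteq> monomials n"
  shows "Poly_Mapping.keys (normal_form U p) \<subseteq> std"
proof -
  have "Poly_Mapping.keys (normal_form U p) \<subseteq> (\<Union>\<beta>\<in>Poly_Mapping.keys p.
      Poly_Mapping.keys (Poly_Mapping.single 0 (Poly_Mapping.lookup p \<beta>) * restr U (nf_monomial \<beta>)))"
    unfolding normal_form_def by (rule keys_sum)
  also have "\<dots> \<subseteq> std"
  proof (rule UN_least)
    fix \<beta> assume "\<beta> \<in> Poly_Mapping.keys p"
    then have "\<beta> \<in> monomials n"
      using assms by blast
    have "Poly_Mapping.keys (restr U (nf_monomial \<beta>)) \<subseteq> std"
      using keys_restr_subset nf_monomial(3)[OF \<open>\<beta> \<in> monomials n\<close>] by (rule subset_trans)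
    then show "Poly_Mapping.keys (Poly_Mapping.single 0 (Poly_Mapping.lookup p \<beta>) *
        restr U (nf_monomial \<beta>)) \<subseteq> std"
      by (rule subset_trans[OF keys_single_zero_mult_subset])
  qed
  finally show ?thesis .
qed

lemma normal_form_ideal:
  assumes "f \<in> I"
  shows "normal_form S f = 0"
proof -
  have f: "f \<in> CP S n" "Poly_Mapping.keys f \<subseteq> monomials n"
    using assms ideal_subset_CP CP_keys by blast+
  have monomial: "Poly_Mapping.single 0 (Poly_Mapping.lookup f \<beta>) * Poly_Mapping.single \<beta> (indicator S) =
      Poly_Mapping.single \<beta> (Poly_Mapping.lookup f \<beta>)" for \<beta>
    using indicator_mult_vanishing[of S "Poly_Mapping.lookup f \<beta>"] CP_vanishes[OF f(1)]
    by (simp add: mult_single mult.commute)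
  have "normal_form S f = (\<Sum>\<beta>\<in>Poly_Mapping.keys f.
      Poly_Mapping.single 0 (Poly_Mapping.lookup f \<beta>) * nf_monomial \<beta>)"
    unfolding normal_form_def using f(2) restr_CP_eq[OF nf_monomial(1)]
    by (intro sum.cong refl) (simp add: subset_iff)
  then have "f - normal_form S f = (\<Sum>\<beta>\<in>Poly_Mapping.keys f.
      Poly_Mapping.single 0 (Poly_Mapping.lookup f \<beta>) * (Poly_Mapping.single \<beta> (indicator S) - nf_monomial \<beta>))"
    by (simp add: right_diff_distrib sum_subtractf monomial sum_single_lookup)
  also have "\<dots> \<in> I"
    using f CP_single[OF monomials_zero CP_continuous CP_vanishes] nf_monomial(2)
    by (intro ideal_sum ideal_mult) auto
  finally have "normal_form S f \<in> I"
    using ideal_diff[OF assms] by force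
  then show ?thesis
    using keys_normal_form_standard[OF f(2)] by (rule standard_ideal_element_eq_zero)
qed

lemma normal_form_mult_restr_ideal:
  assumes "U \<subseteq> S" "f \<in> I" "q \<in> CP U n"
  shows "normal_form U (q * restr U f) = 0"
proof -
  \<comment> \<open>\<open>normal_form U\<close> is only linear over scalars, so each monomial \<open>x\<^sup>\<gamma>\<close> of \<open>q\<close> is moved into
    the element \<open>x\<^sup>\<gamma> f\<close> of \<open>I\<close> before restricting.\<close>
  have monomial_term: "Poly_Mapping.single \<gamma> (Poly_Mapping.lookup q \<gamma>) * restr U f =
     Poly_Mapping.single 0 (Poly_Mapping.lookup q \<gamma>) * restr U (Poly_Mapping.single \<gamma> (indicator S) * f)"
    for \<gamma>
  proof -
    have "Poly_Mapping.lookup q \<gamma> * indicator U = Poly_Mapping.lookup q \<gamma>"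
      using indicator_mult_vanishing[of U "Poly_Mapping.lookup q \<gamma>"] CP_vanishes[OF assms(3)]
      by (simp add: mult.commute)
    moreover have "Poly_Mapping.lookup q \<gamma> * indicator S = Poly_Mapping.lookup q \<gamma>"
      using indicator_mult_vanishing[of S "Poly_Mapping.lookup q \<gamma>"] CP_vanishes[OF assms(3)] assms(1)
      by (auto simp: mult.commute)
    moreover have "indicator U * indicator S = (indicator U :: 'a \<Rightarrow> complex)"
      using assms(1) by (rule indicator_mult_indicator_subset)
    ultimately show ?thesis
      unfolding restr_eq_single_indicator_mult
      by (simp only: mult.assoc[symmetric] mult_single) (simp add: mult.assoc)
  qed
  have "q * restr U f = (\<Sum>\<gamma>\<in>Poly_Mapping.keys q.
      Poly_Mapping.single 0 (Poly_Mapping.lookup q \<gamma>) * restr U (Poly_Mapping.single \<gamma> (indicator S) * f))"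
    by (subst sum_single_lookup[of q, symmetric]) (simp add: sum_distrib_right monomial_term)
  then have "normal_form U (q * restr U f) = (\<Sum>\<gamma>\<in>Poly_Mapping.keys q.
      Poly_Mapping.single 0 (Poly_Mapping.lookup q \<gamma>) *
        restr U (normal_form S (Poly_Mapping.single \<gamma> (indicator S) * f)))"
    by (simp add: normal_form_sum normal_form_single_zero_mult normal_form_restr[OF assms(1)])
  also have "\<dots> = 0"
    using CP_keys[OF assms(3)] assms(2)
    by (intro sum.neutral ballI) (auto simp: normal_form_ideal ideal_mult CP_single_indicator
        restr_eq_single_indicator_mult)
  finally show ?thesis .
qed

lemma normal_form_ideal_restr:
  assumes "U \<subseteq> S" "h \<in> ideal_restr U n I"
  shows "normal_form U h = 0"
proof -
  obtain H q where H: "finite H" "H \<subseteq> restr U ` I" "\<forall>t\<in>H. q t \<in> CP U n" "h = (\<Sum>t\<in>H. q t * t)"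
    using assms(2) unfolding ideal_restr_def by (rule ideal_genE)
  have "normal_form U (q t * t) = 0" if t: "t \<in> H" for t
    using H(2,3) t normal_form_mult_restr_ideal[OF assms(1)] by blast
  then show ?thesis
    unfolding H(4) normal_form_sum by simp
qed

lemma lead_exp_ideal_restr_nonstandard:
  assumes "U \<subseteq> S" "h \<in> ideal_restr U n I" "h \<in> CP U n" "h \<noteq> 0"
  shows "lead_exp ord h \<notin> std"
proof
  define \<delta> where "\<delta> = lead_exp ord h"
  assume "lead_exp ord h \<in> std"
  then have "\<delta> \<in> std"
    by (simp add: \<delta>_def)
  have keys: "Poly_Mapping.keys h \<subseteq> monomials n"
    using assms(3) by (rule CP_keys)
  have \<delta>: "\<delta> \<in> Poly_Mapping.keys h" "\<delta> \<in> monomials n"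
    using lead_exp_in_keys[OF keys assms(4)] keys by (auto simp: \<delta>_def)
  \<comment> \<open>Every other monomial \<open>\<beta>\<close> of \<open>h\<close> lies below \<open>\<delta>\<close>, and so do the monomials of
    \<open>nf_monomial \<beta>\<close>.\<close>
  have other: "Poly_Mapping.lookup (nf_monomial \<beta>) \<delta> = 0" if \<beta>: "\<beta> \<in> Poly_Mapping.keys h - {\<delta>}" for \<beta>
  proof (rule ccontr)
    have "\<beta> \<in> monomials n"
      using \<beta> keys by blast
    assume "Poly_Mapping.lookup (nf_monomial \<beta>) \<delta> \<noteq> 0"
    then have "ord \<delta> \<beta>"
      using nf_monomial(4)[OF \<open>\<beta> \<in> monomials n\<close>] by (simp add: in_keys_iff)
    moreover have "ord \<beta> \<delta>"
      using le_lead_exp[OF keys] \<beta> by (simp add: \<delta>_def)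
    ultimately have "\<beta> = \<delta>"
      using monomial_order_antisym[OF \<open>\<beta> \<in> monomials n\<close> \<delta>(2)] by blast
    then show False
      using \<beta> by blast
  qed
  have "0 = Poly_Mapping.lookup (normal_form U h) \<delta>"
    using normal_form_ideal_restr[OF assms(1,2)] by simp
  also have "\<dots> = (\<Sum>\<beta>\<in>Poly_Mapping.keys h.
      Poly_Mapping.lookup h \<beta> * (indicator U * Poly_Mapping.lookup (nf_monomial \<beta>) \<delta>))"
    unfolding normal_form_def lookup_sum lookup_single_zero_mult lookup_restr ..
  also have "\<dots> = Poly_Mapping.lookup h \<delta> * (indicator U * indicator S)"
    using other \<delta>(1) nf_monomial_standard[OF \<open>\<delta> \<in> std\<close>]
    by (simp add: sum.remove[OF finite_keys \<delta>(1)])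
  also have "\<dots> = Poly_Mapping.lookup h \<delta>"
    using indicator_mult_vanishing[of U "Poly_Mapping.lookup h \<delta>"] CP_vanishes[OF assms(3)]
      indicator_mult_indicator_subset[OF assms(1)]
    by (simp add: mult.commute)
  finally show False
    using \<delta>(1) by (simp add: in_keys_iff)
qed

section \<open>Restricting the basis\<close>

lemma restr_basis:
  assumes "g \<in> set G" "U \<subseteq> S" "U \<noteq> {}"
  shows "lead_exp ord (restr U g) = lead_exp ord g"
    and "LC ord (restr U g) = indicator U * LC ord g"
    and "restr U g \<noteq> 0"
proof -
  obtain x where "x \<in> U"
    using assms(3) by blast
  have lookup_lead: "Poly_Mapping.lookup (restr U g) (lead_exp ord g) = indicator U * LC ord g"
    by (simp add: lookup_restr LC_def)
  then have "Poly_Mapping.lookup (restr U g) (lead_exp ord g) x \<noteq> 0"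
    using LC_basis_nonzero[OF assms(1)] \<open>x \<in> U\<close> assms(2) by auto
  then have lead_in: "lead_exp ord g \<in> Poly_Mapping.keys (restr U g)"
    by (auto simp: in_keys_iff)
  have keys: "Poly_Mapping.keys (restr U g) \<subseteq> Poly_Mapping.keys g" "Poly_Mapping.keys g \<subseteq> monomials n"
    using keys_restr_subset basis_keys[OF assms(1)] by blast+
  have "Poly_Mapping.keys (restr U g) \<subseteq> monomials n"
    using keys by blast
  moreover have "\<forall>b\<in>Poly_Mapping.keys (restr U g). ord b (lead_exp ord g)"
    using keys le_lead_exp[OF keys(2)] by blast
  ultimately show lead: "lead_exp ord (restr U g) = lead_exp ord g"
    using lead_in by (intro lead_exp_eqI)
  show "LC ord (restr U g) = indicator U * LC ord g"
    unfolding LC_def lead using lookup_lead by (simp add: LC_def)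
  show "restr U g \<noteq> 0"
    using lead_in by auto
qed

lemma restr_ideal_mem_ideal_gen_restr_basis:
  assumes "f \<in> I" "U \<subseteq> S"
  shows "restr U f \<in> ideal_gen U n (restr U ` set G)"
proof -
  obtain H q where H: "finite H" "H \<subseteq> set G" "\<forall>g\<in>H. q g \<in> CP S n" "f = (\<Sum>g\<in>H. q g * g)"
    using assms(1) unfolding ideal_gen_basis[symmetric] by (rule ideal_genE)
  have "restr U (q g) * restr U g \<in> ideal_gen U n (restr U ` set G)" if "g \<in> H" for g
  proof (rule ideal_gen_mult)
    show "restr U g \<in> ideal_gen U n (restr U ` set G)"
      using that H(2) by (intro ideal_gen_generator) (auto simp: restr_vanishes)
    show "restr U (q g) \<in> CP U n"
      using restr_CP[OF _ assms(2)] that H(3) by blast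
  qed
  then show ?thesis
    unfolding H(4) restr_sum restr_mult by (rule ideal_gen_sum)
qed

lemma ideal_restr_subset_CP: "U \<subseteq> S \<Longrightarrow> ideal_restr U n I \<subseteq> CP U n"
  unfolding ideal_restr_def using ideal_subset_CP restr_CP by (intro ideal_gen_subset_CP) blast

lemma ideal_gen_restr_basis:
  assumes "U \<subseteq> S"
  shows "ideal_gen U n (restr U ` set G) = ideal_restr U n I"
proof
  show "ideal_gen U n (restr U ` set G) \<subseteq> ideal_restr U n I"
    unfolding ideal_restr_def using basis_subset_ideal by (intro ideal_gen_mono image_mono) blast
  show "ideal_restr U n I \<subseteq> ideal_gen U n (restr U ` set G)"
    unfolding ideal_restr_def using restr_ideal_mem_ideal_gen_restr_basis[OF _ assms]
    by (intro ideal_gen_subset_ideal_gen image_subsetI)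
qed

lemma restr_basis_mem_ideal_restr:
  assumes "g \<in> set G" "U \<subseteq> S"
  shows "restr U g \<in> ideal_restr U n I"
  unfolding ideal_gen_restr_basis[OF assms(2), symmetric]
  using assms(1) by (intro ideal_gen_generator) (auto simp: restr_vanishes)

lemma div_LC_mult_LC_restr:
  assumes "g \<in> set G" "U \<subseteq> S" "U \<noteq> {}" "\<And>x. x \<notin> U \<Longrightarrow> a x = 0"
  shows "(\<lambda>x. a x / LC ord g x) * LC ord (restr U g) = a"
proof
  fix x
  show "((\<lambda>x. a x / LC ord g x) * LC ord (restr U g)) x = a x"
  proof (cases "x \<in> U")
    case True
    then have "LC ord g x \<noteq> 0"
      using LC_basis_nonzero[OF assms(1)] assms(2) by blast
    then show ?thesis
      using True by (simp add: restr_basis(2)[OF assms(1-3)])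
  next
    case False
    then show ?thesis
      using assms(4) by (simp add: restr_basis(2)[OF assms(1-3)])
  qed
qed

lemma LT_ideal_restr_in_ideal_gen_LT_restr_basis:
  assumes "U \<subseteq> S" "U \<noteq> {}" "h \<in> ideal_restr U n I" "h \<noteq> 0"
  shows "LT ord h \<in> ideal_gen U n (LT ord ` restr U ` set G)"
proof -
  have h: "h \<in> CP U n"
    using ideal_restr_subset_CP[OF assms(1)] assms(3) by blast
  define \<delta> where "\<delta> = lead_exp ord h"
  have "\<delta> \<in> monomials n" "\<delta> \<notin> std"
    using lead_exp_in_keys[OF CP_keys[OF h] assms(4)] CP_keys[OF h]
      lead_exp_ideal_restr_nonstandard[OF assms(1,3) h assms(4)] by (auto simp: \<delta>_def)
  then obtain g \<gamma> where g: "g \<in> set G" "\<delta> = lead_exp ord g + \<gamma>"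
    unfolding standard_monomials_def by blast
  have "\<gamma> \<in> monomials n"
    using monomials_addD(2) \<open>\<delta> \<in> monomials n\<close> g(2) by metis
  define c where "c = (\<lambda>x. Poly_Mapping.lookup h \<delta> x / LC ord g x)"
  have c: "Poly_Mapping.single \<gamma> c \<in> CP U n"
    unfolding c_def using assms(1) g(1) \<open>\<gamma> \<in> monomials n\<close> CP_continuous[OF h] CP_vanishes[OF h]
    by (rule CP_single_div_LC)
  have LT_restr: "LT ord (restr U g) \<in> ideal_gen U n (LT ord ` restr U ` set G)"
    using g(1) by (intro ideal_gen_generator) (auto simp: LT_def LC_def lookup_single when_def restr_vanishes)
  have "c * LC ord (restr U g) = Poly_Mapping.lookup h \<delta>"
    unfolding c_def using g(1) assms(1,2) CP_vanishes[OF h] by (rule div_LC_mult_LC_restr)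
  then have "LT ord h = Poly_Mapping.single \<gamma> c * LT ord (restr U g)"
    unfolding LT_def restr_basis(1)[OF g(1) assms(1,2)] mult_single
    by (simp add: LC_def \<delta>_def[symmetric] g(2) add.commute)
  then show ?thesis
    using ideal_gen_mult[OF LT_restr c] by simp
qed

theorem groebner_basis_restr:
  assumes "U \<subseteq> S" "U \<noteq> {}"
  shows "groebner_basis U n ord (map (restr U) G) (ideal_restr U n I)"
  unfolding groebner_basis_def set_map
proof (intro conjI)
  show "restr U ` set G \<subseteq> CP U n"
    using basis_subset_CP restr_CP[OF _ assms(1)] by blast
  show "ideal_gen U n (restr U ` set G) = ideal_restr U n I"
    using assms(1) by (rule ideal_gen_restr_basis)
  show "ideal_gen U n (LT ord ` restr U ` set G) =
      ideal_gen U n {LT ord h |h. h \<in> ideal_restr U n I \<and> h \<noteq> 0}"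
  proof
    have "LT ord ` restr U ` set G \<subseteq> {LT ord h |h. h \<in> ideal_restr U n I \<and> h \<noteq> 0}"
      using restr_basis_mem_ideal_restr[OF _ assms(1)] restr_basis(3)[OF _ assms] by blast
    then show "ideal_gen U n (LT ord ` restr U ` set G) \<subseteq>
        ideal_gen U n {LT ord h |h. h \<in> ideal_restr U n I \<and> h \<noteq> 0}"
      by (rule ideal_gen_mono)
    have "{LT ord h |h. h \<in> ideal_restr U n I \<and> h \<noteq> 0} \<subseteq> ideal_gen U n (LT ord ` restr U ` set G)"
      using LT_ideal_restr_in_ideal_gen_LT_restr_basis[OF assms] by blast
    then show "ideal_gen U n {LT ord h |h. h \<in> ideal_restr U n I \<and> h \<noteq> 0} \<subseteq>
        ideal_gen U n (LT ord ` restr U ` set G)"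
      by (rule ideal_gen_subset_ideal_gen)
  qed
  show "\<forall>g'\<in>restr U ` set G. \<forall>x\<in>U. LC ord g' x \<noteq> 0"
    using LC_basis_nonzero restr_basis(2)[OF _ assms] assms(1) by auto
qed

end

theorem mainTheorem6:
  fixes S A :: "(real^'m::finite) set"
    and n :: nat
    and ord :: "(nat \<Rightarrow>\<^sub>0 nat) \<Rightarrow> (nat \<Rightarrow>\<^sub>0 nat) \<Rightarrow> bool"
    and I :: "(real^'m) cpoly set"
    and G :: "(real^'m) cpoly list"
  assumes "condensed S"
    and "monomial_order n ord"
    and "groebner_basis S n ord G I"
    and "measure_zero_in S A"
  shows "groebner_basis (S - A) n ord (map (restr (S - A)) G) (ideal_restr (S - A) n I)"
proof -
  have "A \<subseteq> S" "A \<noteq> S"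
    using assms(4) unfolding measure_zero_in_def by simp_all
  then have "S - A \<noteq> {}" "S \<noteq> {}"
    by auto
  interpret nonempty_groebner_basis S n ord G I
    using assms(2,3) \<open>S \<noteq> {}\<close> by unfold_locales
  show ?thesis
    using groebner_basis_restr[of "S - A"] \<open>S - A \<noteq> {}\<close> by blast
qed

end
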